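(* Let $k \geq 2$ be an integer and $n := 2^k$. Let $R_k$ denote either $R_k(t) := |P_k(e^{it})|^2$ or $R_k(t) := |Q_k(e^{it})|^2$ (the statement holds for each choice). Then the equation $R_k(t) = n$ has at least $n/4 + 1$ distinct zeros in $K$. Moreover, with $t_j := 2\pi j/n$, there are at least $n/2 + 2$ values of $j \in \{0,1,\ldots,n-1\}$ for which the closed interval $[t_j, t_{j+1}]$ contains at least one solution $t$ of $R_k(t) = n$.
   Context: The Rudin-Shapiro polynomials are defined recursively by $P_0(z) := 1$, $Q_0(z) := 1$, and for $k = 0,1,2,\ldots$: $P_{k+1}(z) := P_k(z) + z^{2^k} Q_k(z)$, $Q_{k+1}(z) := P_k(z) - z^{2^k} Q_k(z)$. Thus $P_k$ and $Q_k$ are polynomials of degree $n-1$, $n = 2^k$, with all coefficients in $\{-1,1\}$. $K := \mathbb{R} \pmod{2\pi}$, i.e. zeros are counted on one period $[0,2\pi)$. *)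

theory Defs
  imports "HOL-Analysis.Analysis" "HOL-Computational_Algebra.Polynomial"
begin

text \<open>Rudin-Shapiro pairs (P_k, Q_k) as complex polynomials.\<close>
fun rs_pair :: "nat \<Rightarrow> complex poly \<times> complex poly" where
  "rs_pair 0 = (1, 1)"
| "rs_pair (Suc k) =
     (let (p, q) = rs_pair k
      in (p + monom 1 (2 ^ k) * q, p - monom 1 (2 ^ k) * q))"

definition RS_P :: "nat \<Rightarrow> complex poly" where
  "RS_P k = fst (rs_pair k)"

definition RS_Q :: "nat \<Rightarrow> complex poly" where
  "RS_Q k = snd (rs_pair k)"

definition sqmod_on_circle :: "complex poly \<Rightarrow> real \<Rightarrow> real" where
  "sqmod_on_circle p t = (cmod (poly p (cis t)))\<^sup>2"

end

theory Submission
  imports Defs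
begin

(* Write n = 2^k = 4m. At the grid points t_j = 2 pi j / n we have e^(i t_j n/2) = (-1)^j, and
   two steps of the Rudin-Shapiro recursion give R_k(t_j) - n = (-1)^j (4 |S(e^(i t_j))|^2 - n),
   where S is P_(k-2) or Q_(k-2) (using |P|^2 + |Q|^2 = 2^(k-1) on the circle).
   Since 4 |S(e^(it))|^2 - n is e^(-i(m-1)t) times a polynomial of degree 2(m-1) in e^(it), it
   changes sign on at most 2m - 2 of the n grid intervals; on every other interval the
   alternating factor makes R_k - n change sign weakly, so it vanishes there by the
   intermediate value theorem. This gives n/2 + 2 intervals, and taking every second one of
   them gives n/4 + 1 distinct zeros. *)

lemma inj_on_cis_period: "inj_on cis {a..<a + 2*pi}"
proof (rule inj_onI)
  fix x y assume x: "x \<in> {a..<a + 2*pi}" and y: "y \<in> {a..<a + 2*pi}" and "cis x = cis y"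
  then obtain n :: int where n: "x = y + 2*pi*n"
    using sin_cos_eq_iff by (auto simp: complex_eq_iff)
  have "\<bar>2*pi*n\<bar> < 2*pi * 1" using x y n by auto
  then have "\<bar>n\<bar> < 1"
    by (simp add: abs_mult)
  then show "x = y" using n by simp
qed

lemma ivt_sign_change:
  fixes f :: "real \<Rightarrow> real"
  assumes "continuous_on {a..b} f" "a \<le> b" "f a * f b \<le> 0"
  shows "\<exists>x\<in>{a..b}. f x = 0"
  using IVT'[of f a 0 b] IVT2'[of f b 0 a] assms by (fastforce simp: mult_le_0_iff)

lemma poly_self_mult_reflect_cnj_cis:
  fixes q :: "complex poly"
  shows "poly (q * reflect_poly (map_poly cnj q) - monom (of_real c) (degree q)) (cis s)
       = cis s ^ degree q * of_real ((cmod (poly q (cis s)))\<^sup>2 - c)"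
proof -
  have "cnj (inverse (cis s)) = cis s" by (simp add: cis_cnj)
  then have "poly (reflect_poly (map_poly cnj q)) (cis s) = cis s ^ degree q * cnj (poly q (cis s))"
    by (simp add: poly_reflect_poly_nz degree_map_poly)
  then show ?thesis
    by (simp add: poly_monom complex_norm_square[symmetric] algebra_simps)
qed

lemma card_level_set_cis_le:
  fixes q :: "complex poly"
  assumes "(cmod (poly q (cis s\<^sub>0)))\<^sup>2 \<noteq> c"
  defines "Z \<equiv> {s \<in> {0..<2*pi}. (cmod (poly q (cis s)))\<^sup>2 = c}"
  shows "finite Z" and "card Z \<le> 2 * degree q"
proof -
  (* On the circle cnj z = 1/z, so z^deg q (|q z|^2 - c) is a polynomial in z. *)
  define h where "h = q * reflect_poly (map_poly cnj q) - monom (of_real c) (degree q)"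
  have h_cis: "poly h (cis s) = cis s ^ degree q * of_real ((cmod (poly q (cis s)))\<^sup>2 - c)" for s
    unfolding h_def by (rule poly_self_mult_reflect_cnj_cis)
  have "h \<noteq> 0"
    using h_cis[of s\<^sub>0] assms(1)
    by (metis cis_neq_zero mult_eq_0_iff of_real_eq_0_iff poly_0 power_eq_0_iff right_minus_eq)
  have roots: "cis ` Z \<subseteq> {x. poly h x = 0}"
    by (auto simp: Z_def h_cis)
  have inj: "inj_on cis Z"
    by (rule inj_on_subset[OF inj_on_cis_period[of 0]]) (auto simp: Z_def)
  have fin: "finite {x. poly h x = 0}"
    using \<open>h \<noteq> 0\<close> by (rule poly_roots_finite)
  show "finite Z"
    using finite_subset[OF roots fin] inj by (rule finite_imageD)
  have "degree h \<le> 2 * degree q"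
    unfolding h_def
    by (intro degree_diff_le order.trans[OF degree_mult_le])
       (auto intro: order.trans[OF degree_reflect_poly_le] order.trans[OF degree_monom_le]
             simp: degree_map_poly)
  then show "card Z \<le> 2 * degree q"
    using card_inj_on_le[OF inj roots fin] card_poly_roots_bound[OF \<open>h \<noteq> 0\<close>] by linarith
qed

lemma card_sign_changes_le:
  fixes q :: "complex poly" and c :: real and t :: "nat \<Rightarrow> real"
  assumes "strict_mono t" "t 0 = 0" "t n = 2*pi"
  defines "g \<equiv> \<lambda>s. (cmod (poly q (cis s)))\<^sup>2 - c"
  shows "card {i \<in> {0..<n}. g (t i) * g (t (Suc i)) < 0} \<le> 2 * degree q"
    (is "card ?B \<le> _")
proof (cases "?B = {}")
  case False
  then obtain i\<^sub>0 where "g (t i\<^sub>0) \<noteq> 0" by force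
  have "\<exists>s. t i < s \<and> s < t (Suc i) \<and> g s = 0" if "i \<in> ?B" for i
  proof -
    have neg: "g (t i) * g (t (Suc i)) < 0" using that by simp
    have "continuous_on {t i..t (Suc i)} g" unfolding g_def by (intro continuous_intros)
    then obtain s where "s \<in> {t i..t (Suc i)}" "g s = 0"
      using ivt_sign_change[of "t i" "t (Suc i)" g] neg strict_mono_less_eq[OF assms(1)] by force
    moreover have "s \<noteq> t i" "s \<noteq> t (Suc i)" using neg \<open>g s = 0\<close> by auto
    ultimately show ?thesis by (intro exI[of _ s]) auto
  qed
  then obtain \<tau> where \<tau>: "\<And>i. i \<in> ?B \<Longrightarrow> t i < \<tau> i \<and> \<tau> i < t (Suc i) \<and> g (\<tau> i) = 0"
    by metis
  have inj: "inj_on \<tau> ?B"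
  proof (rule linorder_inj_onI)
    fix i j assume "i < j" "i \<in> ?B" "j \<in> ?B"
    then have "t (Suc i) \<le> t j" using strict_mono_less_eq[OF assms(1)] by simp
    then show "\<tau> i \<noteq> \<tau> j" using \<tau>[OF \<open>i \<in> ?B\<close>] \<tau>[OF \<open>j \<in> ?B\<close>] by linarith
  qed auto
  define Z where "Z = {s \<in> {0..<2*pi}. (cmod (poly q (cis s)))\<^sup>2 = c}"
  have "\<tau> ` ?B \<subseteq> Z"
  proof (rule image_subsetI)
    fix i assume "i \<in> ?B"
    then have "t 0 \<le> t i" "t (Suc i) \<le> t n"
      using strict_mono_less_eq[OF assms(1)] by auto
    then show "\<tau> i \<in> Z"
      using \<tau>[OF \<open>i \<in> ?B\<close>] assms(2,3) by (auto simp: g_def Z_def)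
  qed
  moreover have "(cmod (poly q (cis (t i\<^sub>0))))\<^sup>2 \<noteq> c"
    using \<open>g (t i\<^sub>0) \<noteq> 0\<close> by (simp add: g_def)
  ultimately have "card ?B \<le> card Z" and "card Z \<le> 2 * degree q"
    using card_inj_on_le[OF inj] card_level_set_cis_le unfolding Z_def by blast+
  then show ?thesis by linarith
qed (metis card.empty zero_le)

lemma card_intervals_with_zero_ge:
  fixes f g :: "real \<Rightarrow> real" and t :: "nat \<Rightarrow> real"
  assumes "mono t" "continuous_on UNIV f" "\<And>i. f (t i) = (-1)^i * g (t i)"
  shows "n - card {i \<in> {0..<n}. g (t i) * g (t (Suc i)) < 0}
           \<le> card {i \<in> {0..<n}. \<exists>s. t i \<le> s \<and> s \<le> t (Suc i) \<and> f s = 0}"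
    (is "n - card ?B \<le> card ?G")
proof -
  have "{0..<n} - ?B \<subseteq> ?G"
  proof
    fix i assume i: "i \<in> {0..<n} - ?B"
    have "f (t i) * f (t (Suc i)) = - (g (t i) * g (t (Suc i)))"
      by (simp add: assms(3))
    then have "f (t i) * f (t (Suc i)) \<le> 0" using i by auto
    then obtain s where "s \<in> {t i..t (Suc i)}" "f s = 0"
      using ivt_sign_change continuous_on_subset[OF assms(2)] monoD[OF assms(1)]
      by (metis le_SucI order_refl subset_UNIV)
    then show "i \<in> ?G" using i by auto
  qed
  then have "card ({0..<n} - ?B) \<le> card ?G" by (intro card_mono) auto
  moreover have "card ({0..<n} - ?B) = n - card ?B"
    by (subst card_Diff_subset) auto
  ultimately show ?thesis by simp
qed

lemma card_zeros_ge_card_separated_intervals: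
  fixes f :: "real \<Rightarrow> real" and t \<tau> :: "nat \<Rightarrow> real"
  assumes t: "strict_mono t" "t 0 = 0" "t n = 2*pi" and "f (2*pi) = f 0"
    and A: "A \<subseteq> {0..<n}" "\<And>i j. i \<in> A \<Longrightarrow> j \<in> A \<Longrightarrow> i < j \<Longrightarrow> Suc i < j"
    and \<tau>: "\<And>i. i \<in> A \<Longrightarrow> t i \<le> \<tau> i \<and> \<tau> i \<le> t (Suc i) \<and> f (\<tau> i) = 0"
    and ends: "0 \<notin> \<tau> ` A \<or> 2*pi \<notin> \<tau> ` A"
  shows "\<exists>S. S \<subseteq> {s. 0 \<le> s \<and> s < 2*pi \<and> f s = 0} \<and> finite S \<and> card A \<le> card S"
proof -
  (* A zero found at 2*pi is recorded as 0, the same point of the circle; by ends this loses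
     no zero. *)
  define wrap where "wrap x = (if x = 2*pi then 0 else x)" for x
  have t_le: "t i \<le> t j \<longleftrightarrow> i \<le> j" and t_less: "t i < t j \<longleftrightarrow> i < j" for i j
    using strict_mono_less_eq strict_mono_less t(1) by blast+
  have "wrap (\<tau> i) \<in> {s. 0 \<le> s \<and> s < 2*pi \<and> f s = 0}" if "i \<in> A" for i
  proof -
    have "t 0 \<le> t i" "t (Suc i) \<le> t n"
      using t_le[of 0 i] t_le[of "Suc i" n] A(1) that by auto
    then show ?thesis
      using \<tau>[OF that] t(2,3) \<open>f (2*pi) = f 0\<close> by (auto simp: wrap_def)
  qed
  then have "wrap ` \<tau> ` A \<subseteq> {s. 0 \<le> s \<and> s < 2*pi \<and> f s = 0}"
    by blast
  moreover have "finite (wrap ` \<tau> ` A)"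
    using A(1) finite_subset by blast
  moreover have inj_\<tau>: "inj_on \<tau> A"
  proof (rule linorder_inj_onI)
    fix i j assume "i < j" "i \<in> A" "j \<in> A"
    then have "t (Suc i) < t j" using A(2) by (simp add: t_less)
    then show "\<tau> i \<noteq> \<tau> j" using \<tau>[OF \<open>i \<in> A\<close>] \<tau>[OF \<open>j \<in> A\<close>] by linarith
  qed auto
  have inj_wrap: "inj_on wrap (\<tau> ` A)"
    using ends by (auto simp: inj_on_def wrap_def image_iff)
  have "card A = card (wrap ` \<tau> ` A)"
    using card_image[OF inj_\<tau>] card_image[OF inj_wrap] by simp
  ultimately show ?thesis by (intro exI[of _ "wrap ` \<tau> ` A"]) simp
qed

lemma card_zeros_ge_half_card_intervals:
  fixes f :: "real \<Rightarrow> real" and t :: "nat \<Rightarrow> real"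
  assumes t: "strict_mono t" "t 0 = 0" "t n = 2*pi" and "even n" and "f (2*pi) = f 0"
  defines "G \<equiv> {i \<in> {0..<n}. \<exists>s. t i \<le> s \<and> s \<le> t (Suc i) \<and> f s = 0}"
  shows "\<exists>S. S \<subseteq> {s. 0 \<le> s \<and> s < 2*pi \<and> f s = 0} \<and> finite S \<and> card G \<le> 2 * card S"
proof -
  have "\<exists>s. t i \<le> s \<and> s \<le> t (Suc i) \<and> f s = 0" if "i \<in> G" for i
    using that by (simp add: G_def)
  then obtain \<tau> where \<tau>: "\<And>i. i \<in> G \<Longrightarrow> t i \<le> \<tau> i \<and> \<tau> i \<le> t (Suc i) \<and> f (\<tau> i) = 0"
    by metis
  have G_less: "i < n" if "i \<in> G" for i
    using that by (simp add: G_def)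
  have G_part: "{i \<in> G. P i} \<subseteq> {0..<n}" for P
    using G_less by auto
  have gap: "Suc i < j" if "i < j" "even i = even j" for i j
    using that by presburger
  note separated = card_zeros_ge_card_separated_intervals[OF t \<open>f (2*pi) = f 0\<close>]
  have "2*pi \<notin> \<tau> ` {i \<in> G. even i}"
  proof
    assume "2*pi \<in> \<tau> ` {i \<in> G. even i}"
    then obtain i where "i \<in> G" "even i" "\<tau> i = 2*pi" by auto
    then have "t (Suc i) < t n"
      using \<open>even n\<close> G_less[of i] strict_mono_less[OF t(1)] by presburger
    then show False using \<tau>[OF \<open>i \<in> G\<close>] \<open>\<tau> i = 2*pi\<close> t(3) by linarith
  qed
  then obtain S\<^sub>e where S\<^sub>e: "S\<^sub>e \<subseteq> {s. 0 \<le> s \<and> s < 2*pi \<and> f s = 0}" "finite S\<^sub>e"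
    "card {i \<in> G. even i} \<le> card S\<^sub>e"
    using separated[OF G_part[of even], where \<tau> = \<tau>] gap \<tau> by auto
  have "0 \<notin> \<tau> ` {i \<in> G. odd i}"
  proof
    assume "0 \<in> \<tau> ` {i \<in> G. odd i}"
    then obtain i where "i \<in> G" "odd i" "\<tau> i = 0" by auto
    then have "t 0 < t i" using strict_mono_less[OF t(1)] by (simp add: odd_pos)
    then show False using \<tau>[OF \<open>i \<in> G\<close>] \<open>\<tau> i = 0\<close> t(2) by linarith
  qed
  then obtain S\<^sub>o where S\<^sub>o: "S\<^sub>o \<subseteq> {s. 0 \<le> s \<and> s < 2*pi \<and> f s = 0}" "finite S\<^sub>o"
    "card {i \<in> G. odd i} \<le> card S\<^sub>o"
    using separated[OF G_part[of odd], where \<tau> = \<tau>] gap \<tau> by auto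
  have "card G = card {i \<in> G. even i} + card {i \<in> G. odd i}"
    using G_less finite_nat_iff_bounded
    by (subst card_Un_disjoint[symmetric]) (auto intro: arg_cong[where f = card])
  then show ?thesis
  proof (cases "card S\<^sub>e \<le> card S\<^sub>o")
    case True
    then show ?thesis using S\<^sub>o S\<^sub>e(3) \<open>card G = _\<close> by (intro exI[of _ S\<^sub>o]) auto
  next
    case False
    then show ?thesis using S\<^sub>e S\<^sub>o(3) \<open>card G = _\<close> by (intro exI[of _ S\<^sub>e]) auto
  qed
qed

lemma zero_counts_of_grid_alternation:
  fixes f :: "real \<Rightarrow> real" and q :: "complex poly" and c :: real and m n :: nat
  assumes "n = 4 * m" and "degree q < m"
    and "continuous_on UNIV f" and "f (2*pi) = f 0"
    and alt: "\<And>i. f (2*pi*real i / real n)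
                 = (-1)^i * ((cmod (poly q (cis (2*pi*real i / real n))))\<^sup>2 - c)"
  defines "G \<equiv> {i \<in> {0..<n}. \<exists>s. 2*pi*real i / real n \<le> s \<and> s \<le> 2*pi*real (Suc i) / real n
                               \<and> f s = 0}"
  shows "2 * m + 2 \<le> card G"
    and "\<exists>S. S \<subseteq> {s. 0 \<le> s \<and> s < 2*pi \<and> f s = 0} \<and> finite S \<and> m + 1 \<le> card S"
proof -
  define t where "t i = 2*pi*real i / real n" for i
  define g where "g s = (cmod (poly q (cis s)))\<^sup>2 - c" for s
  have t: "strict_mono t" "t 0 = 0" "t n = 2*pi"
    using assms(1,2) by (auto intro!: strict_monoI divide_strict_right_mono simp: t_def)
  have G_t: "G = {i \<in> {0..<n}. \<exists>s. t i \<le> s \<and> s \<le> t (Suc i) \<and> f s = 0}"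
    by (simp add: G_def t_def)
  have "f (t i) = (-1)^i * g (t i)" for i
    using alt by (simp add: t_def g_def)
  then have "n - card {i \<in> {0..<n}. g (t i) * g (t (Suc i)) < 0} \<le> card G"
    unfolding G_t by (rule card_intervals_with_zero_ge[OF strict_mono_mono[OF t(1)] assms(3)])
  moreover have "card {i \<in> {0..<n}. g (t i) * g (t (Suc i)) < 0} \<le> 2 * degree q"
    unfolding g_def by (rule card_sign_changes_le[OF t])
  ultimately show G: "2 * m + 2 \<le> card G"
    using assms(1,2) by linarith
  obtain S where "S \<subseteq> {s. 0 \<le> s \<and> s < 2*pi \<and> f s = 0}" "finite S" "card G \<le> 2 * card S"
    using card_zeros_ge_half_card_intervals[OF t _ assms(4)] assms(1) unfolding G_t by auto
  moreover have "m + 1 \<le> card S"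
    using G \<open>card G \<le> 2 * card S\<close> by linarith
  ultimately show "\<exists>S. S \<subseteq> {s. 0 \<le> s \<and> s < 2*pi \<and> f s = 0} \<and> finite S \<and> m + 1 \<le> card S"
    by blast
qed

lemma RS_P_Suc: "RS_P (Suc k) = RS_P k + monom 1 (2^k) * RS_Q k"
  and RS_Q_Suc: "RS_Q (Suc k) = RS_P k - monom 1 (2^k) * RS_Q k"
  by (simp_all add: RS_P_def RS_Q_def split_def Let_def)

lemma degree_add_diff_monom_mult_less:
  fixes p q :: "'a::comm_ring_1 poly"
  assumes "degree p < m" "degree q < m"
  shows "degree (p + monom 1 m * q) < 2 * m" and "degree (p - monom 1 m * q) < 2 * m"
proof -
  have "degree (monom 1 m * q) \<le> m + degree q"
    using degree_mult_le[of "monom 1 m" q] degree_monom_le[of "1::'a" m] by linarith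
  then have "degree (monom 1 m * q) < 2 * m" using assms(2) by linarith
  moreover have "degree p < 2 * m" using assms(1) by linarith
  ultimately show "degree (p + monom 1 m * q) < 2 * m" "degree (p - monom 1 m * q) < 2 * m"
    by (auto intro: le_less_trans[OF degree_add_le_max] le_less_trans[OF degree_diff_le_max])
qed

lemma degree_RS_less: "degree (RS_P k) < 2^k \<and> degree (RS_Q k) < 2^k"
  by (induction k) (simp_all add: RS_P_Suc RS_Q_Suc degree_add_diff_monom_mult_less,
                    simp add: RS_P_def RS_Q_def)

lemma cmod_add_sq_plus_cmod_diff_sq:
  "(cmod (a + b))\<^sup>2 + (cmod (a - b))\<^sup>2 = 2 * (cmod a)\<^sup>2 + 2 * (cmod b)\<^sup>2"
  unfolding cmod_power2 by (simp add: power2_eq_square algebra_simps)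

lemma sqnorm_RS_P_plus_sqnorm_RS_Q:
  assumes "cmod z = 1"
  shows "(cmod (poly (RS_P k) z))\<^sup>2 + (cmod (poly (RS_Q k) z))\<^sup>2 = 2 ^ Suc k"
proof (induction k)
  case 0
  then show ?case by (simp add: RS_P_def RS_Q_def)
next
  case (Suc k)
  have "cmod (z ^ 2^k * poly (RS_Q k) z) = cmod (poly (RS_Q k) z)"
    using assms by (simp add: norm_mult norm_power)
  then show ?case
    using Suc cmod_add_sq_plus_cmod_diff_sq[of "poly (RS_P k) z" "z ^ 2^k * poly (RS_Q k) z"]
    by (simp add: RS_P_Suc RS_Q_Suc poly_monom)
qed

lemma sqnorm_RS_Suc_Suc_alternating:
  assumes z: "cmod z = 1" and half_period: "z ^ 2 ^ Suc k = (-1) ^ i"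
  shows "(cmod (poly (RS_P (k + 2)) z))\<^sup>2 - 2 ^ (k + 2)
           = (-1) ^ i * ((cmod (2 * poly (RS_P k) z))\<^sup>2 - 2 ^ (k + 2))" (is ?P)
    and "(cmod (poly (RS_Q (k + 2)) z))\<^sup>2 - 2 ^ (k + 2)
           = (-1) ^ i * ((cmod (2 * poly (RS_Q k) z))\<^sup>2 - 2 ^ (k + 2))" (is ?Q)
proof -
  define a b u where "a = poly (RS_P k) z" and "b = poly (RS_Q k) z" and "u = z ^ 2 ^ k"
  have "cmod u = 1" using z by (simp add: u_def norm_power)
  have sum: "(cmod a)\<^sup>2 + (cmod b)\<^sup>2 = 2 ^ Suc k"
    unfolding a_def b_def by (rule sqnorm_RS_P_plus_sqnorm_RS_Q[OF z])
  have u2: "u\<^sup>2 = (-1) ^ i"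
    using half_period by (simp add: u_def power_mult[symmetric] mult.commute)
  have "z ^ 2 ^ Suc k = u\<^sup>2"
    using u2 half_period by simp
  then have P: "poly (RS_P (k + 2)) z = (a + u * b) + u\<^sup>2 * (a - u * b)"
    and Q: "poly (RS_Q (k + 2)) z = (a + u * b) - u\<^sup>2 * (a - u * b)"
    by (simp_all add: RS_P_Suc RS_Q_Suc poly_monom a_def b_def u_def)
  have "?P \<and> ?Q"
  proof (cases "even i")
    case True
    then have "poly (RS_P (k + 2)) z = 2 * a" "poly (RS_Q (k + 2)) z = u * (2 * b)"
      using P Q u2 by (simp_all add: algebra_simps)
    then show ?thesis using True \<open>cmod u = 1\<close> by (simp add: a_def b_def norm_mult)
  next
    case False
    then have "poly (RS_P (k + 2)) z = u * (2 * b)" "poly (RS_Q (k + 2)) z = 2 * a"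
      using P Q u2 by (simp_all add: algebra_simps)
    then show ?thesis using False \<open>cmod u = 1\<close> sum
      by (simp add: a_def b_def norm_mult algebra_simps)
  qed
  then show ?P ?Q by auto
qed

lemma cis_grid_power_half:
  "cis (2 * pi * real i / 2 ^ (k + 2)) ^ 2 ^ Suc k = (-1) ^ i"
proof -
  have "cis (2 * pi * real i / 2 ^ (k + 2)) ^ 2 ^ Suc k
          = cis (real (2 ^ Suc k) * (2 * pi * real i / 2 ^ (k + 2)))"
    by (rule Complex.DeMoivre)
  also have "\<dots> = cis (real i * pi)"
    by (simp add: field_simps)
  also have "\<dots> = (-1) ^ i"
    by (simp flip: Complex.DeMoivre)
  finally show ?thesis .
qed

lemma sqmod_RS_grid_alternating:
  assumes "p \<in> {RS_P (k + 2), RS_Q (k + 2)}"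
  obtains q where "degree q < 2 ^ k"
    and "\<And>i. sqmod_on_circle p (2 * pi * real i / 2 ^ (k + 2)) - 2 ^ (k + 2)
               = (-1) ^ i * ((cmod (poly q (cis (2 * pi * real i / 2 ^ (k + 2)))))\<^sup>2 - 2 ^ (k + 2))"
proof -
  note alternating = sqnorm_RS_Suc_Suc_alternating[OF norm_cis cis_grid_power_half]
  from assms show thesis
  proof
    assume "p = RS_P (k + 2)"
    then show thesis
      using that[of "smult 2 (RS_P k)"] alternating(1) degree_RS_less[of k]
      by (simp add: sqmod_on_circle_def)
  next
    assume "p \<in> {RS_Q (k + 2)}"
    then show thesis
      using that[of "smult 2 (RS_Q k)"] alternating(2) degree_RS_less[of k]
      by (simp add: sqmod_on_circle_def)
  qed
qed

theorem theorem2p1: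
  fixes k :: nat and p :: "complex poly"
  assumes "k \<ge> 2"
    and "p \<in> {RS_P k, RS_Q k}"
  shows "(\<exists>S. S \<subseteq> {t. 0 \<le> t \<and> t < 2 * pi \<and> sqmod_on_circle p t = real (2 ^ k)}
              \<and> finite S \<and> real (card S) \<ge> real (2 ^ k) / 4 + 1)
       \<and> real (card {j \<in> {0..<(2::nat) ^ k}. \<exists>t. 2 * pi * real j / real (2 ^ k) \<le> t
                \<and> t \<le> 2 * pi * real (j + 1) / real (2 ^ k)
                \<and> sqmod_on_circle p t = real (2 ^ k)}) \<ge> real (2 ^ k) / 2 + 2"
proof -
  obtain l where k: "k = l + 2" using assms(1) by (metis add.commute le_Suc_ex)
  have "p \<in> {RS_P (l + 2), RS_Q (l + 2)}" using assms(2) k by simp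
  then obtain q where deg_q: "degree q < 2 ^ l"
    and alt: "\<And>i. sqmod_on_circle p (2 * pi * real i / 2 ^ (l + 2)) - 2 ^ (l + 2)
               = (-1) ^ i * ((cmod (poly q (cis (2 * pi * real i / 2 ^ (l + 2)))))\<^sup>2 - 2 ^ (l + 2))"
    using sqmod_RS_grid_alternating by blast
  define f where "f s = sqmod_on_circle p s - 2 ^ k" for s
  have n: "2 ^ k = 4 * (2::nat) ^ l" by (simp add: k power_add)
  have cont: "continuous_on UNIV f"
    unfolding f_def sqmod_on_circle_def by (intro continuous_intros)
  have periodic: "f (2 * pi) = f 0" by (simp add: f_def sqmod_on_circle_def)
  have alt_f: "f (2 * pi * real i / real (2 ^ k))
      = (-1) ^ i * ((cmod (poly q (cis (2 * pi * real i / real (2 ^ k)))))\<^sup>2 - 2 ^ k)" for i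
    using alt[of i] by (simp add: f_def k)
  note counts = zero_counts_of_grid_alternation[OF n deg_q cont periodic alt_f]
  from counts(2) obtain S where S: "S \<subseteq> {s. 0 \<le> s \<and> s < 2 * pi \<and> f s = 0}" "finite S"
    "2 ^ l + 1 \<le> card S" by blast
  show ?thesis
  proof (intro conjI exI)
    show "S \<subseteq> {t. 0 \<le> t \<and> t < 2 * pi \<and> sqmod_on_circle p t = real (2 ^ k)}"
      using S(1) by (auto simp: f_def)
    show "real (2 ^ k) / 4 + 1 \<le> real (card S)"
      using of_nat_mono[where 'a = real, OF S(3)] by (simp add: k power_add)
    show "real (2 ^ k) / 2 + 2 \<le> real (card {j \<in> {0..<(2::nat) ^ k}.
            \<exists>t. 2 * pi * real j / real (2 ^ k) \<le> t \<and> t \<le> 2 * pi * real (j + 1) / real (2 ^ k)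
                \<and> sqmod_on_circle p t = real (2 ^ k)})"
      using of_nat_mono[where 'a = real, OF counts(1)] by (simp add: f_def k power_add)
  qed fact
qed

end
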